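(* Let $Z\subset\mathbb{P}^n$ be a finite set and let $k$ be its Kruskal rank. If $\ell(Z)\le 2k-1$, then $Z$ is separated by forms of degree $2$, i.e. for every $P\in Z$ there is a homogeneous form of degree $2$ vanishing at every point of $Z\setminus\{P\}$ and not vanishing at $P$. Hence $\nu_2(Z)$ is linearly independent.
   Context: All spaces are complex projective. $\ell(Z)$ is the cardinality of $Z$. A finite set is linearly independent if representative vectors of its points are linearly independent. The Kruskal rank of $Z$ is the largest integer $k$ such that every subset of $Z$ of cardinality at most $k$ is linearly independent. $\nu_2:\mathbb{P}^n\to\mathbb{P}(Sym^2(\mathbb{C}^{n+1}))$ is the Veronese map $[L]\mapsto[L^2]$, $L$ a linear form. *)

theory Defs
  imports "HOL-Analysis.Analysis"
begin

text \<open>Points of complex projective space P^n are represented by nonzero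
representative vectors in complex^'n, where CARD('n) = n+1.  A finite set of
points Z is represented by a finite set of nonzero vectors, no two of which are
proportional (so distinct vectors represent distinct points).\<close>

definition proj_point_set :: "(complex^'n) set \<Rightarrow> bool" where
  "proj_point_set Z \<longleftrightarrow> 0 \<notin> Z \<and>
     (\<forall>u\<in>Z. \<forall>v\<in>Z. u \<noteq> v \<longrightarrow> \<not> (\<exists>c::complex. u = c *s v))"

definition lin_indep :: "(complex^'n) set \<Rightarrow> bool" where
  "lin_indep S \<longleftrightarrow> vec.independent S"

text \<open>Kruskal rank: the largest k such that every subset of Z of cardinality at
most k is linearly independent (capped by the cardinality of Z, so that it is
well defined when Z itself is independent).\<close>

definition kruskal_rank :: "(complex^'n) set \<Rightarrow> nat" where
  "kruskal_rank Z = (GREATEST k. k \<le> card Z \<and>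
      (\<forall>S. S \<subseteq> Z \<longrightarrow> card S \<le> k \<longrightarrow> lin_indep S))"

definition quad_form :: "complex^'n^'n \<Rightarrow> complex^'n \<Rightarrow> complex" where
  "quad_form A x = (\<Sum>i\<in>UNIV. \<Sum>j\<in>UNIV. A $ i $ j * x $ i * x $ j)"

text \<open>Veronese map nu_2 on representatives: the linear form L with coefficient
vector v is sent to L^2, represented as the symmetric tensor v (x) v with
coordinates v_i v_j in complex^('n \<times> 'n) (Sym^2 is a subspace of this).\<close>

definition veronese2 :: "complex^'n \<Rightarrow> complex^('n \<times> 'n)" where
  "veronese2 v = (\<chi> p. v $ fst p * v $ snd p)"

end

theory Submission
  imports Defs
begin

text \<open>Fix P in Z.  The remaining card Z - 1 \<le> 2(k-1) points split into two sets X and Y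
of at most k-1 points each, so X \<union> {P} and Y \<union> {P} are linearly independent.  Hence there
are linear forms c and d with c vanishing on X, d vanishing on Y and both nonzero at P, and
the quadric c d separates P from the rest of Z.  A quadric is a linear form on the Veronese
image, so these separating forms also witness that nu_2(Z) is linearly independent.\<close>

definition lin_form :: "'a::field^'n \<Rightarrow> 'a^'n \<Rightarrow> 'a" where
  "lin_form c x = (\<Sum>i\<in>UNIV. c $ i * x $ i)"

lemma lin_form_sum_scale:
  "lin_form c (\<Sum>v\<in>T. u v *s v) = (\<Sum>v\<in>T. u v * lin_form c v)"
proof -
  have "lin_form c (\<Sum>v\<in>T. u v *s v) = (\<Sum>i\<in>UNIV. \<Sum>v\<in>T. c $ i * (u v * v $ i))"
    unfolding lin_form_def by (simp add: sum_component sum_distrib_left)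
  also have "\<dots> = (\<Sum>v\<in>T. \<Sum>i\<in>UNIV. c $ i * (u v * v $ i))"
    by (rule sum.swap)
  finally show ?thesis
    unfolding lin_form_def sum_distrib_left by (simp add: ac_simps)
qed

lemma representation_eq_lin_form:
  fixes B :: "('a::field^'n) set"
  assumes "vec.independent B" and "vec.span B = UNIV"
  shows "vec.representation B x b = lin_form (\<chi> i. vec.representation B (axis i 1) b) x"
proof -
  have span: "v \<in> vec.span B" for v
    using assms(2) by blast
  have "vec.representation B x b = vec.representation B (\<Sum>i\<in>UNIV. x $ i *s axis i 1) b"
    by (simp add: basis_expansion)
  also have "\<dots> = (\<Sum>i\<in>UNIV. x $ i * vec.representation B (axis i 1) b)"
    by (simp add: vec.representation_sum[OF assms(1)] vec.representation_scale[OF assms(1)] span)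
  finally show ?thesis
    by (simp add: lin_form_def mult.commute)
qed

lemma independent_insert_imp_separating_lin_form:
  fixes P :: "'a::field^'n"
  assumes "vec.independent (insert P A)" and "P \<notin> A"
  shows "\<exists>c. (\<forall>a\<in>A. lin_form c a = 0) \<and> lin_form c P \<noteq> 0"
proof -
  obtain B where B: "insert P A \<subseteq> B" "vec.independent B" "UNIV \<subseteq> vec.span B"
    by (rule vec.maximal_independent_subset_extend[OF subset_UNIV assms(1)])
  define c where "c = (\<chi> i. vec.representation B (axis i 1) P)"
  have coord: "vec.representation B x P = lin_form c x" for x
    unfolding c_def using B(2,3) by (intro representation_eq_lin_form) auto
  have "lin_form c b = (if b = P then 1 else 0)" if "b \<in> B" for b
    using vec.representation_basis[OF B(2) that] coord[of b] by auto
  then show ?thesis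
    using B(1) assms(2) by (intro exI[of _ c]) auto
qed

lemma vec_independent_if_separated_by_lin_forms:
  fixes S :: "('a::field^'n) set"
  assumes "\<And>v. v \<in> S \<Longrightarrow> \<exists>c. lin_form c v \<noteq> 0 \<and> (\<forall>w\<in>S - {v}. lin_form c w = 0)"
  shows "vec.independent S"
proof
  assume "vec.dependent S"
  then obtain T u v where T: "finite T" "T \<subseteq> S" "(\<Sum>w\<in>T. u w *s w) = 0"
    and v: "v \<in> T" "u v \<noteq> 0"
    unfolding vec.dependent_explicit by blast
  obtain c where c: "lin_form c v \<noteq> 0" "\<forall>w\<in>S - {v}. lin_form c w = 0"
    using assms v(1) T(2) by blast
  have "0 = lin_form c (\<Sum>w\<in>T. u w *s w)"
    using T(3) by (simp add: lin_form_def)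
  also have "\<dots> = (\<Sum>w\<in>T. u w * lin_form c w)"
    by (rule lin_form_sum_scale)
  also have "\<dots> = u v * lin_form c v"
    using T(1,2) v(1) c(2) by (subst sum.remove[OF T(1) v(1)]) (auto intro!: sum.neutral)
  finally show False
    using v(2) c(1) by simp
qed

lemma quad_form_outer_product:
  "quad_form (\<chi> i j. c $ i * d $ j) x = lin_form c x * lin_form d x"
  unfolding quad_form_def lin_form_def sum_product by (simp add: algebra_simps)

lemma quad_form_eq_lin_form_veronese2:
  "quad_form A x = lin_form (\<chi> p. A $ fst p $ snd p) (veronese2 x)"
proof -
  have "quad_form A x = (\<Sum>p\<in>UNIV \<times> UNIV. A $ fst p $ snd p * x $ fst p * x $ snd p)"
    unfolding quad_form_def by (subst sum.cartesian_product) (simp add: case_prod_beta)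
  then show ?thesis
    unfolding lin_form_def veronese2_def by (simp add: UNIV_Times_UNIV algebra_simps)
qed

lemma kruskal_rank_subset_independent:
  assumes "finite Z" and "S \<subseteq> Z" and "card S \<le> kruskal_rank Z"
  shows "vec.independent S"
proof -
  let ?Q = "\<lambda>k. k \<le> card Z \<and> (\<forall>S. S \<subseteq> Z \<longrightarrow> card S \<le> k \<longrightarrow> lin_indep S)"
  have "?Q 0"
    using assms(1) by (auto simp: lin_indep_def card_eq_0_iff vec.independent_empty dest: finite_subset)
  then have "?Q (Greatest ?Q)"
    by (rule GreatestI_nat[where b = "card Z"]) auto
  then show ?thesis
    using assms(2,3) unfolding kruskal_rank_def lin_indep_def by blast
qed

lemma finite_split_card_le:
  assumes "finite X" and "card X \<le> 2 * m"
  obtains A B where "X = A \<union> B" and "card A \<le> m" and "card B \<le> m"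
proof -
  obtain A where A: "A \<subseteq> X" "card A = min m (card X)"
    using obtain_subset_with_card_n[of "min m (card X)" X] by auto
  show ?thesis
  proof (rule that)
    show "X = A \<union> (X - A)"
      using A(1) by blast
    show "card A \<le> m"
      using A(2) by simp
    show "card (X - A) \<le> m"
      using A assms by (simp add: card_Diff_subset finite_subset)
  qed
qed

lemma separating_quadratic_form:
  fixes Z :: "(complex^'n) set"
  assumes "finite Z" and "P \<in> Z" and "card Z + 1 \<le> 2 * k"
    and indep: "\<And>S. S \<subseteq> Z \<Longrightarrow> card S \<le> k \<Longrightarrow> vec.independent S"
  shows "\<exists>A. (\<forall>Q\<in>Z - {P}. quad_form A Q = 0) \<and> quad_form A P \<noteq> 0"
proof -
  have "finite (Z - {P})"
    using assms(1) by simp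
  moreover have "card (Z - {P}) \<le> 2 * (k - 1)"
    using assms(1-3) by simp
  ultimately obtain X Y where XY: "Z - {P} = X \<union> Y" "card X \<le> k - 1" "card Y \<le> k - 1"
    by (rule finite_split_card_le)
  have XY_sub: "X \<subseteq> Z - {P}" "Y \<subseteq> Z - {P}"
    using XY(1) by blast+
  have separating_lin_form: "\<exists>c. (\<forall>a\<in>W. lin_form c a = 0) \<and> lin_form c P \<noteq> 0"
    if W: "W \<subseteq> Z - {P}" "card W \<le> k - 1" for W
  proof (rule independent_insert_imp_separating_lin_form)
    show "P \<notin> W"
      using W(1) by blast
    have "finite W"
      using W(1) assms(1) finite_subset by blast
    then have "card (insert P W) \<le> k"
      using W assms(3) \<open>P \<notin> W\<close> by simp
    then show "vec.independent (insert P W)"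
      using W(1) assms(2) by (intro indep) auto
  qed
  obtain c where c: "\<forall>a\<in>X. lin_form c a = 0" "lin_form c P \<noteq> 0"
    using separating_lin_form[OF XY_sub(1) XY(2)] by blast
  obtain d where d: "\<forall>a\<in>Y. lin_form d a = 0" "lin_form d P \<noteq> 0"
    using separating_lin_form[OF XY_sub(2) XY(3)] by blast
  show ?thesis
    using c d XY(1) by (intro exI[of _ "\<chi> i j. c $ i * d $ j"]) (auto simp: quad_form_outer_product)
qed

theorem mainTheorem2:
  fixes Z :: "(complex^'n) set"
  assumes "finite Z"
    and "proj_point_set Z"
    and "card Z + 1 \<le> 2 * kruskal_rank Z"
  shows "(\<forall>P\<in>Z. \<exists>A :: complex^'n^'n.
            (\<forall>Q\<in>Z - {P}. quad_form A Q = 0) \<and> quad_form A P \<noteq> 0)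
         \<and> vec.independent (veronese2 ` Z)"
proof
  show sep: "\<forall>P\<in>Z. \<exists>A :: complex^'n^'n.
               (\<forall>Q\<in>Z - {P}. quad_form A Q = 0) \<and> quad_form A P \<noteq> 0"
    using separating_quadratic_form[OF assms(1) _ assms(3)]
      kruskal_rank_subset_independent[OF assms(1)] by blast
  show "vec.independent (veronese2 ` Z)"
  proof (rule vec_independent_if_separated_by_lin_forms)
    fix v assume "v \<in> veronese2 ` Z"
    then obtain P where "P \<in> Z" "v = veronese2 P"
      by blast
    with sep obtain A :: "complex^'n^'n" where
      "\<forall>Q\<in>Z - {P}. quad_form A Q = 0" "quad_form A P \<noteq> 0"
      by blast
    then show "\<exists>c. lin_form c v \<noteq> 0 \<and> (\<forall>w\<in>veronese2 ` Z - {v}. lin_form c w = 0)"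
      using \<open>v = veronese2 P\<close> by (intro exI[of _ "\<chi> p. A $ fst p $ snd p"])
        (auto simp: quad_form_eq_lin_form_veronese2[symmetric])
  qed
qed

end
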